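(* Let $\gamma\in[1,\infty)$, $\alpha\in(\tfrac14,1]$, $s\in\mathbb{R}$, and $\Gamma(x,t)=x-t^\alpha$ for $t\in[0,1]$. Suppose there is a constant $C$ such that for all Schwartz functions $f$ on $\mathbb{R}$, $$\Big\|\sup_{t\in[0,1]}|P_\gamma f(\Gamma(x,t),t)|\Big\|_{L^2([-1,1])}\le C\|f\|_{H^s}.$$ Then $s\ge\tfrac12(1-\tfrac1\gamma)$ if $\gamma\in[\max\{\tfrac1{2\alpha},1\},2)$, and $s\ge\tfrac14$ if $\gamma\in[2,\infty)$.
   Context: For $\gamma>0$ and $t\in[0,1]$, $$P_\gamma f(\Gamma(x,t),t)=\frac1{2\pi}\int_{\mathbb{R}}e^{i(\Gamma(x,t)\xi+t|\xi|^2)}e^{-t^\gamma|\xi|^2}\hat f(\xi)\,d\xi,$$ where $\hat f(\xi)=\int e^{-ix\xi}f(x)\,dx$, and $\|f\|_{H^s}=\|(1+|\xi|^2)^{s/2}\hat f\|_{L^2}$. *)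

theory Defs
  imports "HOL-Analysis.Analysis"
begin

definition schwartz :: "(real \<Rightarrow> complex) \<Rightarrow> bool" where
  "schwartz f \<longleftrightarrow>
     (\<exists>D :: nat \<Rightarrow> real \<Rightarrow> complex.
        D 0 = f \<and>
        (\<forall>n x. (D n has_vector_derivative D (Suc n) x) (at x)) \<and>
        (\<forall>m n. \<exists>B. \<forall>x. norm ((x ^ m) *\<^sub>R D n x) \<le> B))"

definition fourier :: "(real \<Rightarrow> complex) \<Rightarrow> real \<Rightarrow> complex" where
  "fourier f \<xi> = (\<integral>x. exp (- \<i> * complex_of_real (x * \<xi>)) * f x \<partial>lborel)"

definition P_op :: "real \<Rightarrow> (real \<Rightarrow> complex) \<Rightarrow> real \<Rightarrow> real \<Rightarrow> complex" where
  "P_op \<gamma> f y t = complex_of_real (1 / (2 * pi)) *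
     (\<integral>\<xi>. exp (\<i> * complex_of_real (y * \<xi> + t * \<xi>\<^sup>2))
           * complex_of_real (exp (- (t powr \<gamma>) * \<xi>\<^sup>2)) * fourier f \<xi> \<partial>lborel)"

definition Hs_norm :: "real \<Rightarrow> (real \<Rightarrow> complex) \<Rightarrow> real" where
  "Hs_norm s f = sqrt (\<integral>\<xi>. (1 + \<xi>\<^sup>2) powr s * (cmod (fourier f \<xi>))\<^sup>2 \<partial>lborel)"

definition enn_sqrt :: "ennreal \<Rightarrow> ennreal" where
  "enn_sqrt a = (if a = \<infinity> then \<infinity> else ennreal (sqrt (enn2real a)))"

definition maximal_L2 :: "real \<Rightarrow> real \<Rightarrow> (real \<Rightarrow> complex) \<Rightarrow> ennreal" where
  "maximal_L2 \<gamma> \<alpha> f = enn_sqrt (\<integral>\<^sup>+ x\<in>{-1..1}.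
      (SUP t\<in>{0..1}. ennreal (cmod (P_op \<gamma> f (x - t powr \<alpha>) t))) ^ 2 \<partial>lborel)"

end

theory Submission
  imports Defs "HOL-Probability.Probability" "HOL-Computational_Algebra.Polynomial"
begin

(* The test functions are modulated Gaussians f whose Fourier transform
   exp(-(xi+N)^2/(2 sigma^2)) is concentrated at frequency -N with width sigma.
   Up to time t0 = 1/(4 sigma^2) the evolution P_gamma f is a coherent packet of
   height ~ sigma travelling along the ray y = 2Nt, and the damping
   exp(-t^gamma xi^2) is harmless as long as t^gamma N^2 <= 1/4. Since
   t -> t^alpha + 2Nt is continuous, the curve (x - t^alpha, t) meets the packet
   for every x in [0, 2N t0]; so the squared left-hand side is at least of order
   N t0 sigma^2 ~ N, whereas ||f||_{H^s}^2 ~ sigma N^(2s) for 0 <= s <= 1.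
   Choosing t0 = (2N)^(-2/beta) with beta = min gamma 2 and letting N -> infinity
   gives 1 - 1/beta <= 2s. That s >= 0 needs only t = 0: for s < 0 the H^s-norm of
   a fixed Gaussian shifted to frequency N tends to 0. *)

lemma gaussian_moment_even:
  fixes \<sigma> :: real
  assumes "0 < \<sigma>"
  shows "has_bochner_integral lborel (\<lambda>x. exp (-x\<^sup>2/(2*\<sigma>\<^sup>2)) * x^(2*k))
           (sqrt (2*pi*\<sigma>\<^sup>2) * (fact (2*k) / ((2/\<sigma>\<^sup>2)^k * fact k)))"
proof -
  have "has_bochner_integral lborel
          (\<lambda>x. normal_density 0 \<sigma> x * (x - 0)^(2*k) * sqrt (2*pi*\<sigma>\<^sup>2))
          ((fact (2*k) / ((2/\<sigma>\<^sup>2)^k * fact k)) * sqrt (2*pi*\<sigma>\<^sup>2))"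
    by (intro has_bochner_integral_mult_left normal_moment_even assms)
  moreover have "(\<lambda>x. normal_density 0 \<sigma> x * (x - 0)^(2*k) * sqrt (2*pi*\<sigma>\<^sup>2))
      = (\<lambda>x. exp (-x\<^sup>2/(2*\<sigma>\<^sup>2)) * x^(2*k))"
    using assms by (auto simp: normal_density_def fun_eq_iff)
  ultimately show ?thesis by (simp add: mult.commute)
qed

lemma gaussian_moment_odd:
  fixes \<sigma> :: real
  assumes "0 < \<sigma>"
  shows "has_bochner_integral lborel (\<lambda>x. exp (-x\<^sup>2/(2*\<sigma>\<^sup>2)) * x^(2*k+1)) 0"
proof -
  have "has_bochner_integral lborel
          (\<lambda>x. normal_density 0 \<sigma> x * (x - 0)^(2*k+1) * sqrt (2*pi*\<sigma>\<^sup>2)) (0 * sqrt (2*pi*\<sigma>\<^sup>2))"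
    by (intro has_bochner_integral_mult_left normal_moment_odd assms)
  moreover have "(\<lambda>x. normal_density 0 \<sigma> x * (x - 0)^(2*k+1) * sqrt (2*pi*\<sigma>\<^sup>2))
      = (\<lambda>x. exp (-x\<^sup>2/(2*\<sigma>\<^sup>2)) * x^(2*k+1))"
    using assms by (auto simp: normal_density_def fun_eq_iff)
  ultimately show ?thesis by simp
qed

lemma gaussian_moments_0_to_4:
  fixes \<sigma> :: real
  assumes "0 < \<sigma>"
  defines "g \<equiv> \<lambda>x. exp (-x\<^sup>2/(2*\<sigma>\<^sup>2))" and "m \<equiv> sqrt (2*pi*\<sigma>\<^sup>2)"
  shows "has_bochner_integral lborel g m"
    and "has_bochner_integral lborel (\<lambda>x. g x * x) 0"
    and "has_bochner_integral lborel (\<lambda>x. g x * x\<^sup>2) (m * \<sigma>\<^sup>2)"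
    and "has_bochner_integral lborel (\<lambda>x. g x * x^3) 0"
    and "has_bochner_integral lborel (\<lambda>x. g x * x^4) (m * (3*\<sigma>^4))"
proof -
  show "has_bochner_integral lborel g m"
    using gaussian_moment_even[OF assms(1), of 0] by (simp add: g_def m_def)
  show "has_bochner_integral lborel (\<lambda>x. g x * x) 0"
    using gaussian_moment_odd[OF assms(1), of 0] by (simp add: g_def)
  show "has_bochner_integral lborel (\<lambda>x. g x * x\<^sup>2) (m * \<sigma>\<^sup>2)"
    using gaussian_moment_even[OF assms(1), of 1] by (simp add: g_def m_def power2_eq_square)
  show "has_bochner_integral lborel (\<lambda>x. g x * x^3) 0"
    using gaussian_moment_odd[OF assms(1), of 1] by (simp add: g_def numeral_3_eq_3)
  have "fact (2*2) / ((2/\<sigma>\<^sup>2)^2 * fact 2) = (3*\<sigma>^4::real)"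
    using assms by (simp add: fact_numeral power2_eq_square power4_eq_xxxx field_simps)
  then show "has_bochner_integral lborel (\<lambda>x. g x * x^4) (m * (3*\<sigma>^4))"
    using gaussian_moment_even[OF assms(1), of 2] by (simp add: g_def m_def)
qed

lemma integral_gaussian_le_quadratic:
  fixes \<tau> a b :: real and h :: "real \<Rightarrow> real"
  assumes "0 < \<tau>" "0 \<le> a" "0 \<le> b" and h: "\<And>\<eta>. h \<eta> \<le> a + b * \<eta>\<^sup>2"
  shows "(\<integral>\<eta>. h \<eta> * exp (-\<eta>\<^sup>2/(2*\<tau>\<^sup>2)) \<partial>lborel) \<le> sqrt (2*pi*\<tau>\<^sup>2) * (a + b * \<tau>\<^sup>2)"
proof -
  let ?g = "\<lambda>\<eta>::real. exp (-\<eta>\<^sup>2/(2*\<tau>\<^sup>2))"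
  note m = gaussian_moments_0_to_4[OF assms(1)]
  have "has_bochner_integral lborel (\<lambda>\<eta>. a * ?g \<eta> + b * (?g \<eta> * \<eta>\<^sup>2))
          (a * sqrt (2*pi*\<tau>\<^sup>2) + b * (sqrt (2*pi*\<tau>\<^sup>2) * \<tau>\<^sup>2))"
    by (intro has_bochner_integral_add has_bochner_integral_mult_right m(1) m(3))
  then have upper: "has_bochner_integral lborel (\<lambda>\<eta>. (a + b * \<eta>\<^sup>2) * ?g \<eta>)
          (sqrt (2*pi*\<tau>\<^sup>2) * (a + b * \<tau>\<^sup>2))"
    by (simp add: algebra_simps)
  have "(\<integral>\<eta>. h \<eta> * ?g \<eta> \<partial>lborel) \<le> (\<integral>\<eta>. (a + b * \<eta>\<^sup>2) * ?g \<eta> \<partial>lborel)"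
  proof (rule integral_mono')
    show "integrable lborel (\<lambda>\<eta>. (a + b * \<eta>\<^sup>2) * ?g \<eta>)"
      using upper by (simp add: has_bochner_integral_iff)
    show "h \<eta> * ?g \<eta> \<le> (a + b * \<eta>\<^sup>2) * ?g \<eta>" for \<eta>
      using h by (intro mult_right_mono) auto
    show "0 \<le> (a + b * \<eta>\<^sup>2) * ?g \<eta>" for \<eta>
      using assms by simp
  qed
  then show ?thesis
    using upper by (simp add: has_bochner_integral_iff)
qed

lemma powr_add_le_add_powr:
  fixes u v s :: real
  assumes "0 \<le> u" "0 \<le> v" "0 \<le> s" "s \<le> 1"
  shows "(u + v) powr s \<le> u powr s + v powr s"
proof (cases "u + v = 0")
  case True
  then show ?thesis using assms by simp
next
  case False
  then have uv: "0 < u + v" using assms by simp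
  have part: "(u + v) powr s * (w / (u + v)) \<le> w powr s" if "0 \<le> w" "w \<le> u + v" for w
  proof -
    have "w / (u + v) = (w / (u + v)) powr 1"
      using that uv by simp
    also have "\<dots> \<le> (w / (u + v)) powr s"
      using that uv assms by (intro powr_mono') (auto simp: divide_le_eq_1)
    finally have "(u + v) powr s * (w / (u + v)) \<le> (u + v) powr s * (w / (u + v)) powr s"
      by (intro mult_left_mono) auto
    also have "\<dots> = w powr s"
      using that uv by (simp add: powr_divide)
    finally show ?thesis .
  qed
  have "(u + v) powr s = (u + v) powr s * (u / (u + v) + v / (u + v))"
    using uv by (simp add: add_divide_distrib[symmetric])
  also have "\<dots> = (u + v) powr s * (u / (u + v)) + (u + v) powr s * (v / (u + v))"
    by (simp add: distrib_left)
  also have "\<dots> \<le> u powr s + v powr s"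
    using assms by (intro add_mono part) auto
  finally show ?thesis .
qed

lemma one_minus_sq_half_le_cos: "1 - x\<^sup>2/2 \<le> cos (x::real)"
proof -
  have "cos x = 1 - 2 * sin (x/2) ^ 2" using cos_double_sin[of "x/2"] by simp
  moreover have "sin (x/2) ^ 2 \<le> (x/2)^2"
    using abs_sin_x_le_abs_x[of "x/2"] by (metis abs_ge_zero power2_abs power_mono)
  ultimately show ?thesis by (simp add: power_divide)
qed

lemma power_le_fact_mult_exp:
  fixes y :: real
  assumes "0 \<le> y"
  shows "y ^ n \<le> fact n * exp y"
proof -
  have s: "(\<lambda>k. y^k /\<^sub>R fact k) sums exp y" by (rule exp_converges)
  have "(\<Sum>k\<in>{n}. y^k /\<^sub>R fact k) \<le> exp y"
    using sum_le_suminf[OF sums_summable[OF s], of "{n}"] s assms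
    by (auto simp: sums_iff)
  then show ?thesis by (simp add: field_simps)
qed

lemma abs_power_mult_gaussian_le:
  fixes a x :: real
  assumes "0 < a"
  shows "\<bar>x\<bar>^j * exp (-(a*x\<^sup>2)) \<le> 1 + fact j / a^j"
proof (cases "\<bar>x\<bar> \<le> 1")
  case True
  then have "\<bar>x\<bar>^j * exp (-(a*x\<^sup>2)) \<le> 1 * 1"
    using assms by (intro mult_mono power_le_one) auto
  moreover have "0 \<le> fact j / a^j" using assms by simp
  ultimately show ?thesis by linarith
next
  case False
  have "\<bar>x\<bar>^j \<le> \<bar>x\<bar>^(2*j)" using False by (intro power_increasing) auto
  also have "\<dots> = (a*x\<^sup>2)^j / a^j"
    using assms by (simp add: power_mult power2_abs power_mult_distrib)
  also have "\<dots> \<le> fact j * exp (a*x\<^sup>2) / a^j"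
    using power_le_fact_mult_exp[of "a*x\<^sup>2" j] assms by (intro divide_right_mono) auto
  finally have "\<bar>x\<bar>^j * exp (-(a*x\<^sup>2)) \<le> fact j * exp (a*x\<^sup>2) / a^j * exp (-(a*x\<^sup>2))"
    by (rule mult_right_mono) simp
  also have "\<dots> = fact j / a^j" by (simp add: exp_minus field_simps)
  finally show ?thesis by simp
qed

definition modulated_gaussian :: "real \<Rightarrow> real \<Rightarrow> real \<Rightarrow> complex" where
  "modulated_gaussian \<sigma> N x =
     of_real (\<sigma> / sqrt (2*pi) * exp (-(\<sigma>\<^sup>2*x\<^sup>2)/2)) * exp (-\<i> * of_real (N*x))"

lemma integral_std_normal_density_iexp:
  "(\<integral>u. std_normal_density u *\<^sub>R iexp (\<theta> * u) \<partial>lborel) = of_real (exp (- (\<theta>^2) / 2))"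
proof -
  have "char std_normal_distribution \<theta> = of_real (exp (- (\<theta>^2) / 2))"
    by (simp add: char_std_normal_distribution)
  then show ?thesis unfolding char_def
    by (subst (asm) integral_density) auto
qed

lemma fourier_modulated_gaussian:
  fixes \<sigma> N \<xi> :: real
  assumes "0 < \<sigma>"
  shows "fourier (modulated_gaussian \<sigma> N) \<xi> = of_real (exp (-(\<xi>+N)\<^sup>2/(2*\<sigma>\<^sup>2)))"
proof -
  let ?h = "\<lambda>x. exp (- \<i> * of_real (x * \<xi>)) * modulated_gaussian \<sigma> N x"
  have "fourier (modulated_gaussian \<sigma> N) \<xi> = \<bar>1/\<sigma>\<bar> *\<^sub>R (\<integral>u. ?h (0 + (1/\<sigma>) * u) \<partial>lborel)"
    unfolding fourier_def using assms by (intro lborel_integral_real_affine) simp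
  also have "(\<lambda>u. ?h (0 + (1/\<sigma>) * u))
      = (\<lambda>u. \<sigma> *\<^sub>R (std_normal_density u *\<^sub>R iexp ((-(\<xi>+N)/\<sigma>) * u)))"
  proof
    fix u
    have "exp (-(\<sigma>\<^sup>2*(u/\<sigma>)\<^sup>2)/2) = exp (-u\<^sup>2/2)"
      using assms by (simp add: power_divide)
    then have "?h (0 + (1/\<sigma>) * u) = of_real (\<sigma> / sqrt (2*pi) * exp (-u\<^sup>2/2)) *
        (exp (- \<i> * of_real (u/\<sigma> * \<xi>)) * exp (-\<i> * of_real (N*(u/\<sigma>))))"
      unfolding modulated_gaussian_def by simp
    also have "exp (- \<i> * of_real (u/\<sigma> * \<xi>)) * exp (-\<i> * of_real (N*(u/\<sigma>)))
        = iexp ((-(\<xi>+N)/\<sigma>) * u)"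
      by (simp add: exp_add[symmetric] algebra_simps diff_divide_distrib)
    finally show "?h (0 + (1/\<sigma>) * u) = \<sigma> *\<^sub>R (std_normal_density u *\<^sub>R iexp ((-(\<xi>+N)/\<sigma>) * u))"
      by (simp add: std_normal_density_def scaleR_conv_of_real)
  qed
  also have "\<bar>1/\<sigma>\<bar> *\<^sub>R (\<integral>u. \<sigma> *\<^sub>R (std_normal_density u *\<^sub>R iexp ((-(\<xi>+N)/\<sigma>) * u)) \<partial>lborel)
      = of_real (exp (- ((-(\<xi>+N)/\<sigma>)^2) / 2))"
    using assms
    by (simp only: integral_scaleR_right integral_std_normal_density_iexp) (simp add: scaleR_conv_of_real)
  also have "exp (- ((-(\<xi>+N)/\<sigma>)^2) / 2) = exp (-(\<xi>+N)\<^sup>2/(2*\<sigma>\<^sup>2))"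
    unfolding power_divide power2_minus by (simp add: mult.commute)
  finally show ?thesis .
qed

definition complex_gaussian :: "real \<Rightarrow> real \<Rightarrow> complex \<Rightarrow> complex" where
  "complex_gaussian a b z = exp (-(of_real a) * z\<^sup>2 + \<i> * of_real b * z)"

definition gaussian_deriv_step :: "real \<Rightarrow> real \<Rightarrow> complex poly \<Rightarrow> complex poly" where
  "gaussian_deriv_step a b p = pderiv p + p * [: \<i> * of_real b, - 2 * of_real a :]"

lemma has_field_derivative_poly_mult_complex_gaussian:
  "((\<lambda>z. poly p z * complex_gaussian a b z) has_field_derivative
     (poly (gaussian_deriv_step a b p) z * complex_gaussian a b z)) (at z)"
proof -
  have "(complex_gaussian a b has_field_derivative
          complex_gaussian a b z * (-2 * of_real a * z + \<i> * of_real b)) (at z)"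
    unfolding complex_gaussian_def by (auto intro!: derivative_eq_intros simp: algebra_simps)
  from DERIV_mult[OF poly_DERIV[of p z] this] show ?thesis
    by (simp add: gaussian_deriv_step_def algebra_simps)
qed

lemma norm_complex_gaussian_of_real:
  "norm (complex_gaussian a b (of_real x)) = exp (-(a*x\<^sup>2))"
  unfolding complex_gaussian_def by (simp add: power2_eq_square)

lemma norm_poly_le_sum_coeff:
  "norm (poly p (z::complex)) \<le> (\<Sum>i\<le>degree p. norm (coeff p i) * norm z ^ i)"
  unfolding poly_altdef by (rule order.trans[OF norm_sum]) (simp add: norm_mult norm_power)

lemma schwartz_complex_gaussian:
  fixes a b :: real and c :: complex
  assumes "0 < a"
  shows "schwartz (\<lambda>x. c * complex_gaussian a b (of_real x))"
  unfolding schwartz_def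
proof (intro exI[of _ "\<lambda>n x. poly ((gaussian_deriv_step a b ^^ n) [:c:]) (of_real x)
                              * complex_gaussian a b (of_real x)"] conjI allI)
  fix n x
  let ?G = "\<lambda>z. poly ((gaussian_deriv_step a b ^^ n) [:c:]) z * complex_gaussian a b z"
  have "((?G \<circ> of_real) has_vector_derivative
          1 * (poly ((gaussian_deriv_step a b ^^ Suc n) [:c:]) (of_real x)
               * complex_gaussian a b (of_real x))) (at x)"
  proof (rule field_vector_diff_chain_at)
    show "(of_real has_vector_derivative 1) (at x)"
      using has_vector_derivative_of_real[OF DERIV_ident] by simp
    show "(?G has_field_derivative poly ((gaussian_deriv_step a b ^^ Suc n) [:c:]) (of_real x)
            * complex_gaussian a b (of_real x)) (at (of_real x))"
      using has_field_derivative_poly_mult_complex_gaussian by simp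
  qed
  then show "((\<lambda>x. ?G (of_real x)) has_vector_derivative
      poly ((gaussian_deriv_step a b ^^ Suc n) [:c:]) (of_real x) * complex_gaussian a b (of_real x)) (at x)"
    by (simp add: o_def)
next
  fix m n
  let ?P = "(gaussian_deriv_step a b ^^ n) [:c:]"
  show "\<exists>B. \<forall>x. norm ((x ^ m) *\<^sub>R (poly ?P (of_real x) * complex_gaussian a b (of_real x))) \<le> B"
  proof (intro exI allI)
    fix x :: real
    have "norm ((x ^ m) *\<^sub>R (poly ?P (of_real x) * complex_gaussian a b (of_real x)))
        = \<bar>x\<bar>^m * norm (poly ?P (of_real x)) * exp (-(a*x\<^sup>2))"
      by (simp add: norm_mult norm_complex_gaussian_of_real power_abs)
    also have "\<dots> \<le> \<bar>x\<bar>^m * (\<Sum>i\<le>degree ?P. norm (coeff ?P i) * \<bar>x\<bar> ^ i) * exp (-(a*x\<^sup>2))"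
      using norm_poly_le_sum_coeff[of ?P "of_real x"] by (intro mult_right_mono mult_left_mono) auto
    also have "\<dots> = (\<Sum>i\<le>degree ?P. norm (coeff ?P i) * (\<bar>x\<bar> ^ (m+i) * exp (-(a*x\<^sup>2))))"
      by (simp add: sum_distrib_left sum_distrib_right power_add algebra_simps)
    also have "\<dots> \<le> (\<Sum>i\<le>degree ?P. norm (coeff ?P i) * (1 + fact (m+i) / a^(m+i)))"
      by (intro sum_mono mult_left_mono abs_power_mult_gaussian_le assms) auto
    finally show "norm ((x ^ m) *\<^sub>R (poly ?P (of_real x) * complex_gaussian a b (of_real x)))
        \<le> (\<Sum>i\<le>degree ?P. norm (coeff ?P i) * (1 + fact (m+i) / a^(m+i)))" .
  qed
qed simp

lemma schwartz_modulated_gaussian: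
  fixes \<sigma> N :: real
  assumes "0 < \<sigma>"
  shows "schwartz (modulated_gaussian \<sigma> N)"
proof -
  have "schwartz (\<lambda>x. of_real (\<sigma> / sqrt (2*pi)) * complex_gaussian (\<sigma>\<^sup>2/2) (-N) (of_real x))"
    using assms by (intro schwartz_complex_gaussian) simp
  also have "(\<lambda>x. of_real (\<sigma> / sqrt (2*pi)) * complex_gaussian (\<sigma>\<^sup>2/2) (-N) (of_real x))
      = modulated_gaussian \<sigma> N"
  proof
    fix x
    have "of_real (exp (-(\<sigma>\<^sup>2*x\<^sup>2)/2)) * exp (-\<i> * of_real (N*x))
        = exp (of_real (-(\<sigma>\<^sup>2*x\<^sup>2)/2) + (-\<i> * of_real (N*x)))"
      by (simp only: exp_of_real[symmetric] exp_add)
    also have "\<dots> = complex_gaussian (\<sigma>\<^sup>2/2) (-N) (of_real x)"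
      unfolding complex_gaussian_def by (simp add: algebra_simps)
    finally show "of_real (\<sigma> / sqrt (2*pi)) * complex_gaussian (\<sigma>\<^sup>2/2) (-N) (of_real x)
        = modulated_gaussian \<sigma> N x"
      unfolding modulated_gaussian_def by (simp add: mult.assoc)
  qed
  finally show ?thesis .
qed

lemma has_bochner_integral_gaussian_chirp_minorant:
  fixes \<sigma> L t T N :: real
  assumes "0 < \<sigma>"
  shows "has_bochner_integral lborel
     (\<lambda>\<eta>. exp (-\<eta>\<^sup>2/(2*\<sigma>\<^sup>2)) * (1 - (L*\<eta> + t*\<eta>\<^sup>2)\<^sup>2/2 - T*(\<eta>-N)\<^sup>2))
     (sqrt (2*pi*\<sigma>\<^sup>2) * (1 - L\<^sup>2*\<sigma>\<^sup>2/2 - 3/2*t\<^sup>2*\<sigma>^4 - T*(\<sigma>\<^sup>2+N\<^sup>2)))"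
proof -
  let ?g = "\<lambda>\<eta>::real. exp (-\<eta>\<^sup>2/(2*\<sigma>\<^sup>2))"
  let ?m = "sqrt (2*pi*\<sigma>\<^sup>2)"
  note m = gaussian_moments_0_to_4[OF assms]
  have sum: "has_bochner_integral lborel
     (\<lambda>\<eta>. (1 - T*N\<^sup>2) * ?g \<eta> + (2*T*N) * (?g \<eta> * \<eta>) - (L\<^sup>2/2 + T) * (?g \<eta> * \<eta>\<^sup>2)
          - (L*t) * (?g \<eta> * \<eta>^3) - (t\<^sup>2/2) * (?g \<eta> * \<eta>^4))
     ((1 - T*N\<^sup>2) * ?m + (2*T*N) * 0 - (L\<^sup>2/2 + T) * (?m * \<sigma>\<^sup>2) - (L*t) * 0
          - (t\<^sup>2/2) * (?m * (3*\<sigma>^4)))"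
    by (intro has_bochner_integral_diff has_bochner_integral_add has_bochner_integral_mult_right m)
  have integrand: "(\<lambda>\<eta>. (1 - T*N\<^sup>2) * ?g \<eta> + (2*T*N) * (?g \<eta> * \<eta>) - (L\<^sup>2/2 + T) * (?g \<eta> * \<eta>\<^sup>2)
          - (L*t) * (?g \<eta> * \<eta>^3) - (t\<^sup>2/2) * (?g \<eta> * \<eta>^4))
      = (\<lambda>\<eta>. ?g \<eta> * (1 - (L*\<eta> + t*\<eta>\<^sup>2)\<^sup>2/2 - T*(\<eta>-N)\<^sup>2))"
    by (rule ext) (simp add: power2_eq_square power3_eq_cube power4_eq_xxxx algebra_simps)
  have integral: "(1 - T*N\<^sup>2) * ?m + (2*T*N) * 0 - (L\<^sup>2/2 + T) * (?m * \<sigma>\<^sup>2) - (L*t) * 0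
          - (t\<^sup>2/2) * (?m * (3*\<sigma>^4))
      = ?m * (1 - L\<^sup>2*\<sigma>\<^sup>2/2 - 3/2*t\<^sup>2*\<sigma>^4 - T*(\<sigma>\<^sup>2+N\<^sup>2))"
    by (simp add: algebra_simps)
  show ?thesis
    using sum unfolding integrand integral .
qed

lemma norm_integral_chirped_gaussian_ge:
  fixes \<sigma> L t T N :: real
  assumes "0 < \<sigma>" "0 \<le> T"
  shows "sqrt (2*pi*\<sigma>\<^sup>2) * (1 - L\<^sup>2*\<sigma>\<^sup>2/2 - 3/2*t\<^sup>2*\<sigma>^4 - T*(\<sigma>\<^sup>2+N\<^sup>2))
    \<le> cmod (\<integral>\<eta>. exp (\<i> * of_real (L*\<eta> + t*\<eta>\<^sup>2))
                 * of_real (exp (-T*(\<eta>-N)\<^sup>2) * exp (-\<eta>\<^sup>2/(2*\<sigma>\<^sup>2))) \<partial>lborel)"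
proof -
  let ?g = "\<lambda>\<eta>::real. exp (-\<eta>\<^sup>2/(2*\<sigma>\<^sup>2))"
  let ?w = "\<lambda>\<eta>::real. exp (-T*(\<eta>-N)\<^sup>2) * ?g \<eta>"
  let ?\<psi> = "\<lambda>\<eta>. exp (\<i> * of_real (L*\<eta> + t*\<eta>\<^sup>2)) * of_real (?w \<eta>)"
  note minorant = has_bochner_integral_gaussian_chirp_minorant[OF assms(1), of L t T N]
  have w_le: "?w \<eta> \<le> ?g \<eta>" for \<eta>
    using assms(2) by (simp add: mult_le_cancel_right1)
  have \<psi>_integrable: "integrable lborel ?\<psi>"
  proof (rule Bochner_Integration.integrable_bound)
    show "integrable lborel ?g"
      using gaussian_moments_0_to_4(1)[OF assms(1)] by (simp add: has_bochner_integral_iff)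
    show "AE \<eta> in lborel. norm (?\<psi> \<eta>) \<le> norm (?g \<eta>)"
      using w_le by (simp add: norm_mult)
  qed measurable
  have pointwise: "?g \<eta> * (1 - (L*\<eta> + t*\<eta>\<^sup>2)\<^sup>2/2 - T*(\<eta>-N)\<^sup>2) \<le> Re (?\<psi> \<eta>)" for \<eta>
  proof -
    let ?u = "L*\<eta> + t*\<eta>\<^sup>2" and ?v = "T*(\<eta>-N)\<^sup>2"
    have "(1 - ?u\<^sup>2/2) * ?w \<eta> \<le> cos ?u * ?w \<eta>"
      by (intro mult_right_mono one_minus_sq_half_le_cos) simp
    moreover have "(1 - ?v) * ?g \<eta> \<le> ?w \<eta>"
      using exp_ge_add_one_self[of "-?v"] by (intro mult_right_mono) auto
    moreover have "?u\<^sup>2/2 * ?w \<eta> \<le> ?u\<^sup>2/2 * ?g \<eta>"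
      using w_le by (intro mult_left_mono) auto
    ultimately show ?thesis
      by (simp add: Re_exp algebra_simps)
  qed
  have "sqrt (2*pi*\<sigma>\<^sup>2) * (1 - L\<^sup>2*\<sigma>\<^sup>2/2 - 3/2*t\<^sup>2*\<sigma>^4 - T*(\<sigma>\<^sup>2+N\<^sup>2))
      = (\<integral>\<eta>. ?g \<eta> * (1 - (L*\<eta> + t*\<eta>\<^sup>2)\<^sup>2/2 - T*(\<eta>-N)\<^sup>2) \<partial>lborel)"
    using minorant by (simp add: has_bochner_integral_iff)
  also have "\<dots> \<le> (\<integral>\<eta>. Re (?\<psi> \<eta>) \<partial>lborel)"
    using minorant integrable_Re[OF \<psi>_integrable] pointwise
    by (intro integral_mono) (auto simp: has_bochner_integral_iff)
  also have "\<dots> = Re (\<integral>\<eta>. ?\<psi> \<eta> \<partial>lborel)"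
    by (rule integral_Re[OF \<psi>_integrable])
  also have "\<dots> \<le> cmod (\<integral>\<eta>. ?\<psi> \<eta> \<partial>lborel)"
    by (rule complex_Re_le_cmod)
  finally show ?thesis .
qed

text \<open>Substituting \<open>\<xi> = \<eta> - N\<close> centres the Gaussian and splits off a unimodular constant from the
  phase; the remaining linear coefficient \<open>y - 2 t N\<close> vanishes along the ray \<open>y = 2 N t\<close>.\<close>

lemma norm_P_op_modulated_gaussian:
  fixes \<sigma> N y t :: real
  assumes "0 < \<sigma>"
  shows "2*pi * cmod (P_op \<gamma> (modulated_gaussian \<sigma> N) y t)
    = cmod (\<integral>\<eta>. exp (\<i> * of_real ((y - 2*t*N)*\<eta> + t*\<eta>\<^sup>2))
               * of_real (exp (-(t powr \<gamma>)*(\<eta>-N)\<^sup>2) * exp (-\<eta>\<^sup>2/(2*\<sigma>\<^sup>2))) \<partial>lborel)"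
proof -
  define \<Phi> where "\<Phi> = (\<lambda>\<xi>. exp (\<i> * of_real (y * \<xi> + t * \<xi>\<^sup>2))
      * of_real (exp (- (t powr \<gamma>) * \<xi>\<^sup>2)) * fourier (modulated_gaussian \<sigma> N) \<xi>)"
  define \<psi> where "\<psi> = (\<lambda>\<eta>. exp (\<i> * of_real ((y - 2*t*N)*\<eta> + t*\<eta>\<^sup>2))
      * of_real (exp (-(t powr \<gamma>)*(\<eta>-N)\<^sup>2) * exp (-\<eta>\<^sup>2/(2*\<sigma>\<^sup>2))))"
  define c where "c = exp (\<i> * of_real (t*N\<^sup>2 - y*N))"
  have "(\<integral>\<xi>. \<Phi> \<xi> \<partial>lborel) = \<bar>1\<bar> *\<^sub>R (\<integral>\<eta>. \<Phi> (-N + 1*\<eta>) \<partial>lborel)"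
    by (rule lborel_integral_real_affine) simp
  also have "(\<lambda>\<eta>. \<Phi> (-N + 1*\<eta>)) = (\<lambda>\<eta>. c * \<psi> \<eta>)"
  proof
    fix \<eta>
    have "y * (-N + \<eta>) + t * (-N + \<eta>)\<^sup>2 = (t*N\<^sup>2 - y*N) + ((y - 2*t*N)*\<eta> + t*\<eta>\<^sup>2)"
      by (simp add: power2_eq_square algebra_simps)
    moreover have "(-N + \<eta>)\<^sup>2 = (\<eta>-N)\<^sup>2"
      by (simp add: power2_eq_square algebra_simps)
    ultimately show "\<Phi> (-N + 1*\<eta>) = c * \<psi> \<eta>"
      unfolding \<Phi>_def \<psi>_def c_def fourier_modulated_gaussian[OF assms]
      by (simp add: distrib_left exp_add mult_ac)
  qed
  finally have "cmod (\<integral>\<xi>. \<Phi> \<xi> \<partial>lborel) = cmod (\<integral>\<eta>. \<psi> \<eta> \<partial>lborel)"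
    by (simp add: norm_mult c_def)
  then show ?thesis
    unfolding P_op_def \<Phi>_def[symmetric] \<psi>_def[symmetric] by (simp add: norm_divide norm_mult)
qed

lemma P_op_modulated_gaussian_ge:
  fixes \<sigma> N y t :: real
  assumes "0 < \<sigma>" "0 \<le> t"
  shows "sqrt (2*pi*\<sigma>\<^sup>2) * (1 - (y - 2*t*N)\<^sup>2*\<sigma>\<^sup>2/2 - 3/2*t\<^sup>2*\<sigma>^4 - (t powr \<gamma>)*(\<sigma>\<^sup>2+N\<^sup>2))
         \<le> 2*pi * cmod (P_op \<gamma> (modulated_gaussian \<sigma> N) y t)"
  unfolding norm_P_op_modulated_gaussian[OF assms(1)]
  using assms by (intro norm_integral_chirped_gaussian_ge) auto

lemma Hs_norm_sq:
  "(Hs_norm s f)\<^sup>2 = (\<integral>\<xi>. (1 + \<xi>\<^sup>2) powr s * (cmod (fourier f \<xi>))\<^sup>2 \<partial>lborel)"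
  unfolding Hs_norm_def by (intro real_sqrt_pow2 integral_nonneg_AE) auto

lemma Hs_norm_modulated_gaussian_sq:
  fixes \<sigma> N s :: real
  assumes "0 < \<sigma>"
  shows "(Hs_norm s (modulated_gaussian \<sigma> N))\<^sup>2
       = (\<integral>\<eta>. (1 + (\<eta>-N)\<^sup>2) powr s * exp (-\<eta>\<^sup>2/(2*(\<sigma>/sqrt 2)\<^sup>2)) \<partial>lborel)"
proof -
  let ?h = "\<lambda>\<xi>. (1 + \<xi>\<^sup>2) powr s * (cmod (fourier (modulated_gaussian \<sigma> N) \<xi>))\<^sup>2"
  have "(\<integral>\<xi>. ?h \<xi> \<partial>lborel) = \<bar>1\<bar> *\<^sub>R (\<integral>\<eta>. ?h (-N + 1*\<eta>) \<partial>lborel)"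
    by (rule lborel_integral_real_affine) simp
  also have "(\<lambda>\<eta>. ?h (-N + 1*\<eta>)) = (\<lambda>\<eta>. (1 + (\<eta>-N)\<^sup>2) powr s * exp (-\<eta>\<^sup>2/(2*(\<sigma>/sqrt 2)\<^sup>2)))"
  proof
    fix \<eta>
    have "(-N + \<eta>)\<^sup>2 = (\<eta>-N)\<^sup>2"
      by (simp add: power2_eq_square algebra_simps)
    moreover have "(exp (-\<eta>\<^sup>2/(2*\<sigma>\<^sup>2)))\<^sup>2 = exp (-\<eta>\<^sup>2/(2*(\<sigma>/sqrt 2)\<^sup>2))"
      unfolding power2_eq_square[of "exp _"] exp_add[symmetric]
      by (simp add: power_divide field_simps)
    ultimately show "?h (-N + 1*\<eta>) = (1 + (\<eta>-N)\<^sup>2) powr s * exp (-\<eta>\<^sup>2/(2*(\<sigma>/sqrt 2)\<^sup>2))"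
      by (simp add: fourier_modulated_gaussian[OF assms])
  qed
  finally show ?thesis by (simp add: Hs_norm_sq)
qed

lemma Hs_norm_modulated_gaussian_le:
  fixes \<sigma> N s :: real
  assumes "0 < \<sigma>" "1 \<le> N" "\<sigma>\<^sup>2 \<le> 2*N\<^sup>2" "0 \<le> s" "s \<le> 1"
  shows "(Hs_norm s (modulated_gaussian \<sigma> N))\<^sup>2 \<le> 9 * \<sigma> * sqrt pi * N powr (2 * s)"
proof -
  define K where "K = N powr (2 * s)"
  have K: "0 \<le> K" "(N\<^sup>2) powr s = K"
    using assms(2) by (simp_all add: K_def powr_powr[symmetric] powr_numeral)
  have weight: "(1 + (\<eta>-N)\<^sup>2) powr s \<le> 7*K + (4*K/\<sigma>\<^sup>2) * \<eta>\<^sup>2" for \<eta>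
  proof -
    have "(\<eta>-N)\<^sup>2 + (\<eta>+N)\<^sup>2 = 2*\<eta>\<^sup>2 + 2*N\<^sup>2"
      by (simp add: power2_eq_square algebra_simps)
    moreover have "1 \<le> N\<^sup>2"
      using assms(2) by (simp add: one_le_power)
    ultimately have "1 + (\<eta>-N)\<^sup>2 \<le> 3*N\<^sup>2 + 2*\<eta>\<^sup>2"
      using zero_le_power2[of "\<eta>+N"] by linarith
    then have "(1 + (\<eta>-N)\<^sup>2) powr s \<le> (3*N\<^sup>2 + 2*\<eta>\<^sup>2) powr s"
      using assms by (intro powr_mono2) auto
    also have "\<dots> = (3*N\<^sup>2 + 2*\<sigma>\<^sup>2 * (\<eta>\<^sup>2/\<sigma>\<^sup>2)) powr s"
      using assms(1) by simp
    also have "\<dots> \<le> (3*N\<^sup>2) powr s + (2*\<sigma>\<^sup>2 * (\<eta>\<^sup>2/\<sigma>\<^sup>2)) powr s"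
      using assms by (intro powr_add_le_add_powr) auto
    also have "(3*N\<^sup>2) powr s \<le> 3*K"
      using powr_mono[of s 1 3] assms K by (simp add: powr_mult mult_right_mono)
    also have "(2*\<sigma>\<^sup>2 * (\<eta>\<^sup>2/\<sigma>\<^sup>2)) powr s \<le> (4*K) * (1 + \<eta>\<^sup>2/\<sigma>\<^sup>2)"
    proof -
      have "(2*\<sigma>\<^sup>2) powr s \<le> (4*N\<^sup>2) powr s"
        using assms by (intro powr_mono2) auto
      also have "\<dots> \<le> 4*K"
        using powr_mono[of s 1 4] assms K by (simp add: powr_mult mult_right_mono)
      finally have "(2*\<sigma>\<^sup>2) powr s \<le> 4*K" .
      moreover have "(\<eta>\<^sup>2/\<sigma>\<^sup>2) powr s \<le> (1 + \<eta>\<^sup>2/\<sigma>\<^sup>2) powr s"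
        using assms by (intro powr_mono2) auto
      moreover have "(1 + \<eta>\<^sup>2/\<sigma>\<^sup>2) powr s \<le> (1 + \<eta>\<^sup>2/\<sigma>\<^sup>2) powr 1"
        using assms by (intro powr_mono) auto
      ultimately have "(2*\<sigma>\<^sup>2) powr s * (\<eta>\<^sup>2/\<sigma>\<^sup>2) powr s \<le> (4*K) * (1 + \<eta>\<^sup>2/\<sigma>\<^sup>2)"
        using K by (intro mult_mono) auto
      moreover have "(2*\<sigma>\<^sup>2 * (\<eta>\<^sup>2/\<sigma>\<^sup>2)) powr s = (2*\<sigma>\<^sup>2) powr s * (\<eta>\<^sup>2/\<sigma>\<^sup>2) powr s"
        by (rule powr_mult)
      ultimately show ?thesis
        by simp
    qed
    finally show ?thesis
      using assms(1) by (simp add: field_simps)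
  qed
  have "(Hs_norm s (modulated_gaussian \<sigma> N))\<^sup>2
      \<le> sqrt (2*pi*(\<sigma>/sqrt 2)\<^sup>2) * (7*K + (4*K/\<sigma>\<^sup>2) * (\<sigma>/sqrt 2)\<^sup>2)"
    unfolding Hs_norm_modulated_gaussian_sq[OF assms(1)]
    using assms K weight by (intro integral_gaussian_le_quadratic) auto
  also have "\<dots> = 9 * \<sigma> * sqrt pi * K"
    using assms(1) by (simp add: power_divide real_sqrt_mult)
  finally show ?thesis unfolding K_def .
qed

lemma Hs_norm_modulated_gaussian_decay:
  fixes N s s' :: real
  assumes "s \<le> s'" "-1 \<le> s'" "s' \<le> 0"
  shows "(Hs_norm s (modulated_gaussian 1 N))\<^sup>2 \<le> 3 * sqrt pi * (1 + N\<^sup>2) powr s'"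
proof -
  define K where "K = (1 + N\<^sup>2) powr s'"
  have weight: "(1 + (\<eta>-N)\<^sup>2) powr s \<le> 2*K + 2*K * \<eta>\<^sup>2" for \<eta>
  proof -
    define A where "A = 1 + (\<eta>-N)\<^sup>2"
    define B where "B = 1 + \<eta>\<^sup>2"
    have A: "1 \<le> A" and B: "1 \<le> B"
      unfolding A_def B_def by auto
    \<comment> \<open>Peetre's inequality\<close>
    have "N\<^sup>2 = 2*\<eta>\<^sup>2 + 2*(\<eta>-N)\<^sup>2 - (2*\<eta> - N)\<^sup>2"
      by (simp add: power2_eq_square algebra_simps)
    moreover have "2 * A * B = 2 + 2*\<eta>\<^sup>2 + 2*(\<eta>-N)\<^sup>2 + 2*(\<eta>\<^sup>2 * (\<eta>-N)\<^sup>2)"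
      unfolding A_def B_def by (simp add: algebra_simps)
    ultimately have "1 + N\<^sup>2 \<le> 2 * A * B"
      using zero_le_power2[of "2*\<eta> - N"] mult_nonneg_nonneg[OF zero_le_power2 zero_le_power2, of \<eta> "\<eta>-N"]
      by linarith
    then have "(2 * A * B) powr s' \<le> K"
      unfolding K_def using assms by (intro powr_mono2') (auto intro: add_pos_nonneg)
    moreover have "2 powr (-s') * B powr (-s') \<le> 2 * B"
      using assms B powr_mono[of "-s'" 1 2] powr_mono[of "-s'" 1 B] by (intro mult_mono) auto
    ultimately have "(2 * A * B) powr s' * (2 powr (-s') * B powr (-s')) \<le> K * (2 * B)"
      by (rule mult_mono) (auto simp: K_def)
    moreover have "A powr s \<le> A powr s'"
      using A assms by (intro powr_mono) auto
    moreover have "A powr s' = (2 * A * B) powr s' * (2 powr (-s') * B powr (-s'))"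
      using A B by (simp add: powr_mult powr_minus field_simps)
    ultimately show ?thesis
      unfolding A_def B_def by (simp add: algebra_simps)
  qed
  have "(Hs_norm s (modulated_gaussian 1 N))\<^sup>2
      \<le> sqrt (2*pi*(1/sqrt 2)\<^sup>2) * (2*K + 2*K * (1/sqrt 2)\<^sup>2)"
    unfolding Hs_norm_modulated_gaussian_sq[OF zero_less_one]
    using weight by (intro integral_gaussian_le_quadratic) (auto simp: K_def)
  also have "\<dots> = 3 * sqrt pi * K"
    by (simp add: power_divide)
  finally show ?thesis unfolding K_def .
qed

lemma maximal_L2_ge:
  fixes a b B :: real
  assumes "-1 \<le> a" "a \<le> b" "b \<le> 1" "0 \<le> B"
    and large: "\<And>x. x \<in> {a..b} \<Longrightarrow> \<exists>t\<in>{0..1}. B \<le> cmod (P_op \<gamma> f (x - t powr \<alpha>) t)"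
  shows "ennreal (sqrt (b - a) * B) \<le> maximal_L2 \<gamma> \<alpha> f"
proof -
  define S where "S = (\<lambda>x. (SUP t\<in>{0..1}. ennreal (cmod (P_op \<gamma> f (x - t powr \<alpha>) t))))"
  define I where "I = (\<integral>\<^sup>+ x\<in>{-1..1}. (S x) ^ 2 \<partial>lborel)"
  have "ennreal ((b - a) * B\<^sup>2) = ennreal (B\<^sup>2) * emeasure lborel {a..b}"
    using assms by (simp add: ennreal_mult' mult.commute)
  also have "\<dots> = (\<integral>\<^sup>+ x. ennreal (B\<^sup>2) * indicator {a..b} x \<partial>lborel)"
    by (simp add: nn_integral_cmult_indicator)
  also have "\<dots> \<le> I"
    unfolding I_def
  proof (intro nn_integral_mono)
    fix x
    show "ennreal (B\<^sup>2) * indicator {a..b} x \<le> (S x)^2 * indicator {-1..1} x"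
    proof (cases "x \<in> {a..b}")
      case True
      then obtain t where "t \<in> {0..1}" "B \<le> cmod (P_op \<gamma> f (x - t powr \<alpha>) t)"
        using large by blast
      then have "ennreal B \<le> S x"
        unfolding S_def by (intro SUP_upper2) auto
      then have "ennreal B ^ 2 \<le> (S x)^2"
        by (rule power_mono) simp
      then show ?thesis
        using True assms by (simp add: ennreal_power)
    qed simp
  qed
  finally have lower: "ennreal ((b - a) * B\<^sup>2) \<le> I" .
  have max_eq: "maximal_L2 \<gamma> \<alpha> f = enn_sqrt I"
    unfolding maximal_L2_def I_def S_def ..
  show ?thesis
  proof (cases "I = \<infinity>")
    case True
    then show ?thesis
      unfolding max_eq enn_sqrt_def by simp
  next
    case False
    then obtain r where r: "I = ennreal r" "0 \<le> r"
      by (cases I rule: ennreal_cases) auto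
    have "sqrt (b - a) * B = sqrt ((b - a) * B\<^sup>2)"
      using assms by (simp add: real_sqrt_mult)
    also have "\<dots> \<le> sqrt r"
      using lower r by (intro real_sqrt_le_mono) simp
    finally have "ennreal (sqrt (b - a) * B) \<le> ennreal (sqrt r)"
      by (rule ennreal_leI)
    then show ?thesis
      unfolding max_eq enn_sqrt_def using r by simp
  qed
qed

lemma maximal_estimate_lower_bound:
  fixes a b B C s :: real
  assumes est: "maximal_L2 \<gamma> \<alpha> f \<le> ennreal (C * Hs_norm s f)"
    and "-1 \<le> a" "a < b" "b \<le> 1" "0 < B"
    and large: "\<And>x. x \<in> {a..b} \<Longrightarrow> \<exists>t\<in>{0..1}. B \<le> cmod (P_op \<gamma> f (x - t powr \<alpha>) t)"
  shows "(b - a) * B\<^sup>2 \<le> C\<^sup>2 * (Hs_norm s f)\<^sup>2"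
proof -
  have pos: "0 < sqrt (b - a) * B"
    using assms by simp
  have "ennreal (sqrt (b - a) * B) \<le> maximal_L2 \<gamma> \<alpha> f"
    by (rule maximal_L2_ge[OF _ _ _ _ large]) (use assms in auto)
  also have "\<dots> \<le> ennreal (C * Hs_norm s f)"
    by (rule est)
  finally have "ennreal (sqrt (b - a) * B) \<le> ennreal (C * Hs_norm s f)" .
  then have "sqrt (b - a) * B \<le> C * Hs_norm s f"
    using pos by (auto simp: ennreal_le_iff2)
  then have "(sqrt (b - a) * B)\<^sup>2 \<le> (C * Hs_norm s f)\<^sup>2"
    using pos by (intro power_mono) auto
  then show ?thesis
    using assms by (simp add: power_mult_distrib)
qed

lemma maximal_estimate_imp_nonneg:
  fixes \<gamma> \<alpha> s C :: real
  assumes est: "\<forall>f. schwartz f \<longrightarrow> maximal_L2 \<gamma> \<alpha> f \<le> ennreal (C * Hs_norm s f)"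
  shows "0 \<le> s"
proof (rule ccontr)
  assume "\<not> 0 \<le> s"
  define s' where "s' = max s (-1)"
  have s': "s' < 0" "s \<le> s'" "-1 \<le> s'"
    using \<open>\<not> 0 \<le> s\<close> unfolding s'_def by auto
  define B where "B = sqrt (2*pi) / (4*pi)"
  have "2 * B\<^sup>2 \<le> C\<^sup>2 * (3 * sqrt pi * (1 + N\<^sup>2) powr s')" for N :: real
  proof -
    have "(1 - (-1)) * B\<^sup>2 \<le> C\<^sup>2 * (Hs_norm s (modulated_gaussian 1 N))\<^sup>2"
    proof (rule maximal_estimate_lower_bound)
      show "maximal_L2 \<gamma> \<alpha> (modulated_gaussian 1 N) \<le> ennreal (C * Hs_norm s (modulated_gaussian 1 N))"
        using est schwartz_modulated_gaussian[of 1 N] by simp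
      fix x :: real
      assume "x \<in> {-1..1}"
      then have "x\<^sup>2 \<le> 1"
        by (auto simp: abs_square_le_1 abs_le_iff)
      then have "sqrt (2*pi) * (1/2) \<le> sqrt (2*pi) * (1 - x\<^sup>2/2)"
        by (intro mult_left_mono) auto
      also have "\<dots> \<le> 2*pi * cmod (P_op \<gamma> (modulated_gaussian 1 N) (x - 0 powr \<alpha>) 0)"
        using P_op_modulated_gaussian_ge[of 1 0 "x - 0 powr \<alpha>" N \<gamma>] by simp
      finally have "B \<le> cmod (P_op \<gamma> (modulated_gaussian 1 N) (x - 0 powr \<alpha>) 0)"
        unfolding B_def by (simp add: field_simps)
      then show "\<exists>t\<in>{0..1}. B \<le> cmod (P_op \<gamma> (modulated_gaussian 1 N) (x - t powr \<alpha>) t)"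
        by force
    qed (auto simp: B_def)
    also have "\<dots> \<le> C\<^sup>2 * (3 * sqrt pi * (1 + N\<^sup>2) powr s')"
      using s' by (intro mult_left_mono Hs_norm_modulated_gaussian_decay) auto
    finally show ?thesis by simp
  qed
  moreover have "((\<lambda>N::real. C\<^sup>2 * (3 * sqrt pi * (1 + N\<^sup>2) powr s')) \<longlongrightarrow> C\<^sup>2 * (3 * sqrt pi * 0)) at_top"
    by (intro tendsto_mult tendsto_const tendsto_neg_powr[OF \<open>s' < 0\<close>]) real_asymp
  then have "eventually (\<lambda>N::real. C\<^sup>2 * (3 * sqrt pi * (1 + N\<^sup>2) powr s') < 2 * B\<^sup>2) at_top"
    by (intro order_tendstoD(2)) (auto simp: B_def)
  then obtain N :: real where "C\<^sup>2 * (3 * sqrt pi * (1 + N\<^sup>2) powr s') < 2 * B\<^sup>2"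
    by (metis eventually_at_top_linorder order_refl)
  ultimately show False
    by (meson not_le)
qed

lemma curve_meets_ray:
  fixes \<alpha> c t\<^sub>0 x :: real
  assumes "0 < \<alpha>" "0 \<le> t\<^sub>0" "x \<in> {0 .. c * t\<^sub>0}"
  shows "\<exists>t\<in>{0..t\<^sub>0}. x - t powr \<alpha> = c * t"
proof -
  have "continuous_on {0..t\<^sub>0} (\<lambda>t. t powr \<alpha> + c * t)"
    using assms(1) by (intro continuous_intros continuous_on_powr') auto
  moreover have "0 powr \<alpha> + c * 0 \<le> x" "x \<le> t\<^sub>0 powr \<alpha> + c * t\<^sub>0"
    using assms(3) powr_ge_zero[of t\<^sub>0 \<alpha>] by (auto simp del: powr_ge_zero)
  ultimately obtain t where "0 \<le> t" "t \<le> t\<^sub>0" "t powr \<alpha> + c * t = x"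
    using IVT'[of "\<lambda>t. t powr \<alpha> + c * t" 0 x t\<^sub>0] assms(2) by auto
  then show ?thesis
    by force
qed

lemma P_op_modulated_gaussian_on_ray_ge:
  fixes \<gamma> N t\<^sub>0 t :: real
  assumes "1 \<le> \<gamma>" "0 < t\<^sub>0" "t\<^sub>0 \<le> 1" "t\<^sub>0 powr \<gamma> * N\<^sup>2 \<le> 1/4" "0 \<le> t" "t \<le> t\<^sub>0"
  shows "sqrt (2*pi) / (16 * pi * sqrt t\<^sub>0)
    \<le> cmod (P_op \<gamma> (modulated_gaussian (1 / (2 * sqrt t\<^sub>0)) N) (2*N*t) t)"
proof -
  define \<sigma> where "\<sigma> = 1 / (2 * sqrt t\<^sub>0)"
  define T where "T = t powr \<gamma>"
  have \<sigma>: "0 < \<sigma>" "\<sigma>\<^sup>2 = 1 / (4*t\<^sub>0)"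
    unfolding \<sigma>_def using assms(2) by (simp_all add: power_divide power_mult_distrib)
  have T: "0 \<le> T" "T \<le> t\<^sub>0 powr \<gamma>" "t\<^sub>0 powr \<gamma> \<le> t\<^sub>0"
    unfolding T_def using assms powr_mono'[of 1 \<gamma> t\<^sub>0] by (auto intro: powr_mono2)
  have "t\<^sup>2 * \<sigma>^4 \<le> t\<^sub>0\<^sup>2 * (\<sigma>\<^sup>2)\<^sup>2"
    using assms by (simp add: power_mono mult_right_mono flip: power_mult)
  also have "\<dots> = 1/16"
    using \<sigma> assms(2) by (simp add: power_divide power_mult_distrib)
  finally have "t\<^sup>2 * \<sigma>^4 \<le> 1/16" .
  moreover have "T * \<sigma>\<^sup>2 \<le> 1/4"
    using T \<sigma> assms(2) mult_right_mono[of T t\<^sub>0 "\<sigma>\<^sup>2"] by simp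
  moreover have "T * N\<^sup>2 \<le> 1/4"
    using T assms(4) mult_right_mono[of T "t\<^sub>0 powr \<gamma>" "N\<^sup>2"] by simp
  ultimately have "1/4 \<le> 1 - (2*N*t - 2*t*N)\<^sup>2*\<sigma>\<^sup>2/2 - 3/2*t\<^sup>2*\<sigma>^4 - T*(\<sigma>\<^sup>2+N\<^sup>2)"
    by (simp add: distrib_left)
  then have "sqrt (2*pi*\<sigma>\<^sup>2) * (1/4)
      \<le> sqrt (2*pi*\<sigma>\<^sup>2) * (1 - (2*N*t - 2*t*N)\<^sup>2*\<sigma>\<^sup>2/2 - 3/2*t\<^sup>2*\<sigma>^4 - T*(\<sigma>\<^sup>2+N\<^sup>2))"
    by (rule mult_left_mono) simp
  also have "\<dots> \<le> 2*pi * cmod (P_op \<gamma> (modulated_gaussian \<sigma> N) (2*N*t) t)"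
    unfolding T_def using \<sigma> assms by (intro P_op_modulated_gaussian_ge) auto
  also have "sqrt (2*pi*\<sigma>\<^sup>2) = sqrt (2*pi) / (2 * sqrt t\<^sub>0)"
    using \<sigma>(1) by (simp add: real_sqrt_mult \<sigma>_def)
  finally have "sqrt (2*pi) / (2 * sqrt t\<^sub>0) * (1/4) / (2*pi)
      \<le> 2*pi * cmod (P_op \<gamma> (modulated_gaussian \<sigma> N) (2*N*t) t) / (2*pi)"
    by (rule divide_right_mono) simp
  then have "sqrt (2*pi) / (2 * sqrt t\<^sub>0) * (1/4) / (2*pi)
      \<le> cmod (P_op \<gamma> (modulated_gaussian \<sigma> N) (2*N*t) t)"
    by simp
  moreover have "sqrt (2*pi) / (2 * sqrt t\<^sub>0) * (1/4) / (2*pi) = sqrt (2*pi) / (16 * pi * sqrt t\<^sub>0)"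
    by simp
  ultimately show ?thesis
    unfolding \<sigma>_def by (simp add: ac_simps)
qed

lemma maximal_estimate_imp_packet_bound:
  fixes \<gamma> \<alpha> s C N t\<^sub>0 :: real
  assumes est: "\<forall>f. schwartz f \<longrightarrow> maximal_L2 \<gamma> \<alpha> f \<le> ennreal (C * Hs_norm s f)"
    and "1 \<le> \<gamma>" "0 < \<alpha>" "0 \<le> s" "s \<le> 1" "1 \<le> N"
    and "1 / (8*N\<^sup>2) \<le> t\<^sub>0" "2*N*t\<^sub>0 \<le> 1" "t\<^sub>0 powr \<gamma> * N\<^sup>2 \<le> 1/4"
  shows "N * sqrt t\<^sub>0 \<le> 288 * pi * sqrt pi * C\<^sup>2 * N powr (2 * s)"
proof -
  define \<sigma> where "\<sigma> = 1 / (2 * sqrt t\<^sub>0)"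
  define B where "B = sqrt (2*pi) / (16 * pi * sqrt t\<^sub>0)"
  have "0 < 1 / (8*N\<^sup>2)"
    using assms(6) by simp
  then have "0 < t\<^sub>0"
    using assms(7) by linarith
  moreover have "t\<^sub>0 \<le> 2*N*t\<^sub>0"
    using mult_right_mono[of 1 "2*N" t\<^sub>0] \<open>0 < t\<^sub>0\<close> assms(6) by simp
  ultimately have t\<^sub>0: "0 < t\<^sub>0" "t\<^sub>0 \<le> 1"
    using assms(8) by linarith+
  have \<sigma>: "0 < \<sigma>" "\<sigma>\<^sup>2 = 1 / (4*t\<^sub>0)"
    unfolding \<sigma>_def using t\<^sub>0 by (simp_all add: power_divide power_mult_distrib)
  have "N / (64*pi) = (2*N*t\<^sub>0 - 0) * B\<^sup>2"
    using t\<^sub>0 by (simp add: B_def power_divide power_mult_distrib power2_eq_square)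
  also have "\<dots> \<le> C\<^sup>2 * (Hs_norm s (modulated_gaussian \<sigma> N))\<^sup>2"
  proof (rule maximal_estimate_lower_bound)
    show "maximal_L2 \<gamma> \<alpha> (modulated_gaussian \<sigma> N) \<le> ennreal (C * Hs_norm s (modulated_gaussian \<sigma> N))"
      using est schwartz_modulated_gaussian[OF \<sigma>(1)] by simp
    fix x
    assume "x \<in> {0 .. 2*N*t\<^sub>0}"
    then obtain t where t: "t \<in> {0..t\<^sub>0}" "x - t powr \<alpha> = 2*N*t"
      using curve_meets_ray[of \<alpha> t\<^sub>0 x "2*N"] assms(3) t\<^sub>0 by auto
    then have "B \<le> cmod (P_op \<gamma> (modulated_gaussian \<sigma> N) (x - t powr \<alpha>) t)"
      unfolding B_def \<sigma>_def using P_op_modulated_gaussian_on_ray_ge[of \<gamma> t\<^sub>0 N t] assms t\<^sub>0 by auto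
    moreover have "t \<in> {0..1}"
      using t(1) t\<^sub>0 by auto
    ultimately show "\<exists>t\<in>{0..1}. B \<le> cmod (P_op \<gamma> (modulated_gaussian \<sigma> N) (x - t powr \<alpha>) t)"
      by blast
  qed (use assms t\<^sub>0 in \<open>auto simp: B_def\<close>)
  also have "\<dots> \<le> C\<^sup>2 * (9 * \<sigma> * sqrt pi * N powr (2 * s))"
  proof (intro mult_left_mono Hs_norm_modulated_gaussian_le)
    have "1 / (4*t\<^sub>0) \<le> 1 / (4 * (1 / (8*N\<^sup>2)))"
      using t\<^sub>0 assms(6,7) by (intro divide_left_mono mult_left_mono) auto
    then show "\<sigma>\<^sup>2 \<le> 2*N\<^sup>2"
      using \<sigma>(2) by simp
  qed (use assms \<sigma> in auto)
  finally have "N / (64*pi) \<le> C\<^sup>2 * (9 * \<sigma> * sqrt pi * N powr (2 * s))" .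
  then have "N / (64*pi) * (128 * pi * sqrt t\<^sub>0)
      \<le> C\<^sup>2 * (9 * \<sigma> * sqrt pi * N powr (2 * s)) * (128 * pi * sqrt t\<^sub>0)"
    using t\<^sub>0 by (intro mult_right_mono) auto
  moreover have "N / (64*pi) * (128 * pi * sqrt t\<^sub>0) = 2 * (N * sqrt t\<^sub>0)"
    by simp
  moreover have "C\<^sup>2 * (9 * \<sigma> * sqrt pi * N powr (2 * s)) * (128 * pi * sqrt t\<^sub>0)
      = 2 * (288 * pi * sqrt pi * C\<^sup>2 * N powr (2 * s))"
    using t\<^sub>0 by (simp add: \<sigma>_def)
  ultimately show ?thesis
    by linarith
qed

lemma exponent_le_if_powr_bounded:
  fixes a b K :: real
  assumes "\<And>N. 1 \<le> N \<Longrightarrow> N powr a \<le> K * N powr b"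
  shows "a \<le> b"
proof (rule ccontr)
  assume "\<not> a \<le> b"
  then have "filterlim (\<lambda>N::real. N powr (a - b)) at_top at_top"
    by (intro real_powr_at_top) simp
  then have "eventually (\<lambda>N::real. K + 1 \<le> N powr (a - b)) at_top"
    by (simp add: filterlim_at_top)
  then have "eventually (\<lambda>N::real. K + 1 \<le> N powr (a - b) \<and> 1 \<le> N) at_top"
    using eventually_ge_at_top by (rule eventually_conj)
  then obtain N\<^sub>0 :: real where "\<forall>N\<ge>N\<^sub>0. K + 1 \<le> N powr (a - b) \<and> 1 \<le> N"
    unfolding eventually_at_top_linorder by blast
  then have N: "K + 1 \<le> N\<^sub>0 powr (a - b)" "1 \<le> N\<^sub>0"
    by auto
  have "N\<^sub>0 powr (a - b) = N\<^sub>0 powr a / N\<^sub>0 powr b"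
    using N(2) by (simp add: powr_diff)
  also have "\<dots> \<le> K"
    using assms[OF N(2)] N(2) by (simp add: divide_le_eq)
  finally show False
    using N(1) by simp
qed

lemma packet_time_admissible:
  fixes \<beta> \<gamma> N :: real
  assumes "1 \<le> \<beta>" "\<beta> \<le> 2" "\<beta> \<le> \<gamma>" "1 \<le> N"
  defines "t\<^sub>0 \<equiv> (2*N) powr (-2/\<beta>)"
  shows "1 / (8*N\<^sup>2) \<le> t\<^sub>0" "2*N*t\<^sub>0 \<le> 1" "t\<^sub>0 powr \<gamma> * N\<^sup>2 \<le> 1/4"
    and "N powr (1 - 1/\<beta>) \<le> 2 * (N * sqrt t\<^sub>0)"
proof -
  have M: "1 \<le> 2*N"
    using assms by simp
  have \<beta>: "0 < \<beta>" "1/\<beta> \<le> 1" "2/\<beta> \<le> 2" "1 \<le> 2/\<beta>"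
    using assms by (simp_all add: field_simps)
  have sq: "(2*N) powr (-2) = 1 / (4*N\<^sup>2)"
    using M by (simp add: powr_minus powr_numeral power_mult_distrib inverse_eq_divide)
  have "1 / (8*N\<^sup>2) \<le> 1 / (4*N\<^sup>2)"
    using assms by (intro divide_left_mono) auto
  also have "\<dots> \<le> t\<^sub>0"
    unfolding t\<^sub>0_def sq[symmetric] using M \<beta> by (intro powr_mono) auto
  finally show "1 / (8*N\<^sup>2) \<le> t\<^sub>0" .
  have "2*N*t\<^sub>0 = (2*N) powr (1 + -2/\<beta>)"
    unfolding t\<^sub>0_def powr_add using M by simp
  also have "\<dots> \<le> (2*N) powr 0"
    using M \<beta> by (intro powr_mono) auto
  finally show "2*N*t\<^sub>0 \<le> 1"
    using M by simp
  have "t\<^sub>0 \<le> (2*N) powr 0"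
    unfolding t\<^sub>0_def using M \<beta> by (intro powr_mono) auto
  then have "t\<^sub>0 \<le> 1"
    using M by simp
  then have "t\<^sub>0 powr \<gamma> \<le> t\<^sub>0 powr \<beta>"
    using assms by (intro powr_mono') (auto simp: t\<^sub>0_def)
  also have "t\<^sub>0 powr \<beta> = 1 / (4*N\<^sup>2)"
    unfolding t\<^sub>0_def powr_powr sq[symmetric] using \<beta> by simp
  finally show "t\<^sub>0 powr \<gamma> * N\<^sup>2 \<le> 1/4"
    using assms by (simp add: field_simps)
  have "sqrt t\<^sub>0 = t\<^sub>0 powr (1/2)"
    unfolding t\<^sub>0_def by (simp add: powr_half_sqrt)
  also have "\<dots> = 2 powr (-1/\<beta>) * N powr (-1/\<beta>)"
    unfolding t\<^sub>0_def powr_powr using assms by (simp add: powr_mult)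
  finally have sqrt_t\<^sub>0: "sqrt t\<^sub>0 = 2 powr (-1/\<beta>) * N powr (-1/\<beta>)" .
  have "(2::real) powr (-1) \<le> 2 powr (-1/\<beta>)"
    using \<beta> by (intro powr_mono) auto
  then have "1/2 \<le> (2::real) powr (-1/\<beta>)"
    by (simp add: powr_minus)
  then have "N powr (-1/\<beta>) \<le> 2 * sqrt t\<^sub>0"
    unfolding sqrt_t\<^sub>0 using mult_right_mono[of "1/2" "2 powr (-1/\<beta>)" "N powr (-1/\<beta>)"] by simp
  then have "N * N powr (-1/\<beta>) \<le> 2 * (N * sqrt t\<^sub>0)"
    using assms mult_left_mono[of "N powr (-1/\<beta>)" "2 * sqrt t\<^sub>0" N] by simp
  moreover have "N powr (1 - 1/\<beta>) = N * N powr (-1/\<beta>)"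
    using powr_add[of N 1 "-1/\<beta>"] assms by simp
  ultimately show "N powr (1 - 1/\<beta>) \<le> 2 * (N * sqrt t\<^sub>0)"
    by simp
qed

lemma maximal_estimate_imp_sobolev_exponent:
  fixes \<gamma> \<alpha> s C :: real
  assumes est: "\<forall>f. schwartz f \<longrightarrow> maximal_L2 \<gamma> \<alpha> f \<le> ennreal (C * Hs_norm s f)"
    and "1 \<le> \<gamma>" "0 < \<alpha>"
  shows "(1 - 1 / min \<gamma> 2) / 2 \<le> s"
proof (cases "s \<le> 1")
  case True
  define \<beta> where "\<beta> = min \<gamma> 2"
  have \<beta>: "1 \<le> \<beta>" "\<beta> \<le> 2" "\<beta> \<le> \<gamma>"
    unfolding \<beta>_def using assms by auto
  have "0 \<le> s"
    using est by (rule maximal_estimate_imp_nonneg)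
  have "N powr (1 - 1/\<beta>) \<le> (2 * (288 * pi * sqrt pi * C\<^sup>2)) * N powr (2 * s)" if "1 \<le> N" for N
  proof -
    note t\<^sub>0 = packet_time_admissible[OF \<beta> that]
    have "N powr (1 - 1/\<beta>) \<le> 2 * (N * sqrt ((2*N) powr (-2/\<beta>)))"
      by (fact t\<^sub>0(4))
    also have "\<dots> \<le> 2 * (288 * pi * sqrt pi * C\<^sup>2 * N powr (2 * s))"
      using assms \<open>0 \<le> s\<close> True that t\<^sub>0(1-3)
      by (intro mult_left_mono maximal_estimate_imp_packet_bound) auto
    finally show ?thesis
      by simp
  qed
  then have "1 - 1/\<beta> \<le> 2 * s"
    by (rule exponent_le_if_powr_bounded)
  then show ?thesis
    unfolding \<beta>_def by simp
next
  case False
  have "(1 - 1 / min \<gamma> 2) / 2 \<le> 1 / 2"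
    using assms(2) by (simp add: field_simps)
  also have "\<dots> \<le> s"
    using False by linarith
  finally show ?thesis .
qed

theorem theorem3p2:
  fixes \<gamma> \<alpha> s C :: real
  assumes "1 \<le> \<gamma>"
    and "1/4 < \<alpha>" and "\<alpha> \<le> 1"
    and "\<forall>f. schwartz f \<longrightarrow> maximal_L2 \<gamma> \<alpha> f \<le> ennreal (C * Hs_norm s f)"
  shows "(max (1 / (2 * \<alpha>)) 1 \<le> \<gamma> \<and> \<gamma> < 2 \<longrightarrow> s \<ge> (1 - 1/\<gamma>) / 2)
       \<and> (2 \<le> \<gamma> \<longrightarrow> s \<ge> 1/4)"
proof -
  have bound: "(1 - 1 / min \<gamma> 2) / 2 \<le> s"
    using assms by (intro maximal_estimate_imp_sobolev_exponent) auto
  show ?thesis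
  proof (intro conjI impI)
    assume "max (1 / (2 * \<alpha>)) 1 \<le> \<gamma> \<and> \<gamma> < 2"
    then have "min \<gamma> 2 = \<gamma>"
      by simp
    then show "s \<ge> (1 - 1/\<gamma>) / 2"
      using bound by simp
  next
    assume "2 \<le> \<gamma>"
    then have "min \<gamma> 2 = 2"
      by simp
    then show "s \<ge> 1/4"
      using bound by simp
  qed
qed

end
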